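(* Let $-1\le i\le N$. Suppose $\Delta^i-k^2$ and $\Delta^{i+1}-k^2$ are elliptic of order two on $\mathcal X'$ and satisfy the uniqueness condition for the local Cauchy problem on $\mathcal X'$, and let $G^i$ and $G^{i+1}$ be left fundamental solutions of $\Delta^i-k^2$ and $\Delta^{i+1}-k^2$ on $\mathcal X'$ (classical pseudodifferential operators of order $-2$ on sections of $F^i$, resp. $F^{i+1}$). Then the pseudodifferential operator $$\Phi^i=\begin{pmatrix}G^i\bigl(\imath k+\frac1{\imath k}A^{i-1}A^{i-1*}\bigr) & G^iA^{i*}\\ G^{i+1}A^i & G^{i+1}\bigl(-\imath k-\frac1{\imath k}A^{i+1*}A^{i+1}\bigr)\end{pmatrix}$$ is a left fundamental solution of $M^i$ on $\mathcal X'$, i.e. $\Phi^iM^iw=w$ for every smooth compactly supported section $w$ of $F^i\oplus F^{i+1}$.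
   Context: Let $\mathcal X'$ be a $C^\infty$ manifold with a smooth positive volume form. Let $F^0,\dots,F^N$ be smooth complex vector bundles over $\mathcal X'$ with Hermitian metrics, $F^j=0$ for $j\notin\{0,\dots,N\}$, and let $A^j:C^\infty(\mathcal X',F^j)\to C^\infty(\mathcal X',F^{j+1})$ be first order differential operators (zero when $F^j$ or $F^{j+1}$ is zero) with $A^{j+1}A^j=0$. $A^{j*}$ is the formal adjoint of $A^j$ with respect to the $L^2$ inner products given by the metrics and volume form; $\Delta^j=A^{j*}A^j+A^{j-1}A^{j-1*}$. Let $k\neq0$ be a complex number with $\Im k\ge0$ and $\imath$ the imaginary unit. The Maxwell operator at step $i$ is $M^i=\begin{pmatrix}\imath k & A^{i*}\\ A^i&-\imath k\end{pmatrix}$ on sections of $F^i\oplus F^{i+1}$. A left fundamental solution of a differential operator $P$ is an operator $G$ with $GPw=w$ for all smooth compactly supported sections $w$. *)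

theory Defs
  imports Main "HOL-Analysis.Analysis"
begin

text \<open>The type 's is an ambient complex vector space
(scalar multiplication sc) containing, for every degree j, the subspace Cc j of smooth
compactly supported sections of F^j. ip j is the L2 inner product on Cc j.\<close>

definition csubspace_on :: "(complex \<Rightarrow> 's::ab_group_add \<Rightarrow> 's) \<Rightarrow> 's set \<Rightarrow> bool" where
  "csubspace_on sc S \<longleftrightarrow> 0 \<in> S \<and> (\<forall>x\<in>S. \<forall>y\<in>S. x + y \<in> S) \<and> (\<forall>c. \<forall>x\<in>S. sc c x \<in> S)"

definition herm_ip_on ::
  "(complex \<Rightarrow> 's::ab_group_add \<Rightarrow> 's) \<Rightarrow> 's set \<Rightarrow> ('s \<Rightarrow> 's \<Rightarrow> complex) \<Rightarrow> bool" where
  "herm_ip_on sc S ip \<longleftrightarrow>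
     (\<forall>x\<in>S. \<forall>y\<in>S. \<forall>z\<in>S. ip (x + y) z = ip x z + ip y z) \<and>
     (\<forall>c. \<forall>x\<in>S. \<forall>y\<in>S. ip (sc c x) y = c * ip x y) \<and>
     (\<forall>x\<in>S. \<forall>y\<in>S. ip y x = cnj (ip x y)) \<and>
     (\<forall>x\<in>S. x \<noteq> 0 \<longrightarrow> Im (ip x x) = 0 \<and> Re (ip x x) > 0)"

definition Lap :: "(int \<Rightarrow> 's::ab_group_add \<Rightarrow> 's) \<Rightarrow> (int \<Rightarrow> 's \<Rightarrow> 's) \<Rightarrow> int \<Rightarrow> 's \<Rightarrow> 's" where
  "Lap A Astar j w = Astar j (A j w) + A (j - 1) (Astar (j - 1) w)"

definition Maxwell ::
  "(complex \<Rightarrow> 's::ab_group_add \<Rightarrow> 's) \<Rightarrow> (int \<Rightarrow> 's \<Rightarrow> 's) \<Rightarrow> (int \<Rightarrow> 's \<Rightarrow> 's) \<Rightarrow> complex \<Rightarrow> int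
    \<Rightarrow> 's \<times> 's \<Rightarrow> 's \<times> 's" where
  "Maxwell sc A Astar k i w =
     (sc (\<i> * k) (fst w) + Astar i (snd w), A i (fst w) + sc (- (\<i> * k)) (snd w))"

definition Phi ::
  "(complex \<Rightarrow> 's::ab_group_add \<Rightarrow> 's) \<Rightarrow> (int \<Rightarrow> 's \<Rightarrow> 's) \<Rightarrow> (int \<Rightarrow> 's \<Rightarrow> 's) \<Rightarrow> complex \<Rightarrow> int
    \<Rightarrow> ('s \<Rightarrow> 's) \<Rightarrow> ('s \<Rightarrow> 's) \<Rightarrow> 's \<times> 's \<Rightarrow> 's \<times> 's" where
  "Phi sc A Astar k i Gi Gi1 w =
     (Gi (sc (\<i> * k) (fst w) + sc (1 / (\<i> * k)) (A (i - 1) (Astar (i - 1) (fst w))))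
        + Gi (Astar i (snd w)),
      Gi1 (A i (fst w))
        + Gi1 (sc (- (\<i> * k)) (snd w) - sc (1 / (\<i> * k)) (Astar (i + 1) (A (i + 1) (snd w)))))"

end

theory Submission
  imports Defs
begin

text \<open>Composing the matrix
  \<open>(\<i>k + (\<i>k)\<^sup>-\<^sup>1 A A\<^sup>*, A\<^sup>*; A, -\<i>k - (\<i>k)\<^sup>-\<^sup>1 A\<^sup>* A)\<close> with \<open>M\<^sup>i\<close> gives
  \<open>diag(\<Delta>\<^sup>i - k\<^sup>2, \<Delta>\<^sup>i\<^sup>+\<^sup>1 - k\<^sup>2)\<close>: in each row the cross terms \<open>\<plusminus>\<i>k A\<^sup>*v\<close>,
  \<open>\<plusminus>\<i>k A u\<close> cancel, and the leftover terms \<open>A A\<^sup>* A\<^sup>* v\<close> and \<open>A\<^sup>* A A u\<close> vanish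
  because \<open>A A = 0\<close> and hence, by definiteness of the inner product, \<open>A\<^sup>* A\<^sup>* = 0\<close>.
  The left fundamental solutions \<open>G\<^sup>i\<close>, \<open>G\<^sup>i\<^sup>+\<^sup>1\<close> then invert the diagonal.\<close>

lemma herm_ip_on_zero_left:
  assumes "herm_ip_on sc S ip" "csubspace_on sc S" "v \<in> S"
  shows "ip 0 v = 0"
proof -
  have "0 \<in> S" using assms(2) unfolding csubspace_on_def by blast
  then have "ip (0 + 0) v = ip 0 v + ip 0 v"
    using assms(1,3) unfolding herm_ip_on_def by meson
  then show ?thesis by simp
qed

lemma herm_ip_on_self_eq_zero:
  assumes "herm_ip_on sc S ip" "x \<in> S" "ip x x = 0"
  shows "x = 0"
proof (rule ccontr)
  assume "x \<noteq> 0"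
  then have "Re (ip x x) > 0" using assms(1,2) unfolding herm_ip_on_def by blast
  then show False using assms(3) by simp
qed

lemma adjoint_comp_adjoint_eq_zero:
  assumes sub: "\<forall>j. csubspace_on sc (Cc j)"
    and ipj: "\<forall>j. herm_ip_on sc (Cc j) (ip j)"
    and mapA: "\<forall>j. A j ` Cc j \<subseteq> Cc (j + 1)"
    and mapAs: "\<forall>j. Astar j ` Cc (j + 1) \<subseteq> Cc j"
    and adj: "\<forall>j. \<forall>u\<in>Cc j. \<forall>v\<in>Cc (j + 1). ip (j + 1) (A j u) v = ip j u (Astar j v)"
    and cplx: "\<forall>j. \<forall>u\<in>Cc j. A (j + 1) (A j u) = 0"
    and v: "v \<in> Cc (j + 2)"
  shows "Astar j (Astar (j + 1) v) = 0"
proof -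
  define x where "x = Astar j (Astar (j + 1) v)"
  from v have v: "v \<in> Cc (j + 1 + 1)" by (simp add: add.assoc)
  have Asv: "Astar (j + 1) v \<in> Cc (j + 1)" using mapAs v by blast
  then have x: "x \<in> Cc j" using mapAs unfolding x_def by blast
  have Ax: "A j x \<in> Cc (j + 1)" using mapA x by blast
  have "ip j x x = ip (j + 1) (A j x) (Astar (j + 1) v)"
    using adj[rule_format, OF x Asv] unfolding x_def by simp
  also have "\<dots> = ip (j + 1 + 1) (A (j + 1) (A j x)) v"
    using adj[rule_format, OF Ax v] by simp
  also have "\<dots> = 0"
    using cplx x herm_ip_on_zero_left[OF ipj[rule_format] sub[rule_format] v] by simp
  finally show ?thesis
    using herm_ip_on_self_eq_zero[OF ipj[rule_format] x] unfolding x_def by blast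
qed

lemma fst_Phi_Maxwell:
  assumes "vector_space sc"
    and linA: "\<forall>j. Vector_Spaces.linear sc sc (A j)"
    and linAs: "\<forall>j. Vector_Spaces.linear sc sc (Astar j)"
    and linG: "Vector_Spaces.linear sc sc Gi"
    and "k \<noteq> 0"
    and AsAs: "Astar (i - 1) (Astar i v) = 0"
  shows "fst (Phi sc A Astar k i Gi Gi1 (Maxwell sc A Astar k i (u, v)))
           = Gi (Lap A Astar i u - sc (k\<^sup>2) u)"
proof -
  interpret vector_space sc by fact
  have A: "module_hom sc sc (A j)" and As: "module_hom sc sc (Astar j)" for j
    using linA linAs by (simp_all add: linear_iff_module_hom)
  have G: "module_hom sc sc Gi" using linG by (simp add: linear_iff_module_hom)
  have "(\<i> * k) * (\<i> * k) = - k\<^sup>2" by (simp add: power2_eq_square algebra_simps)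
  then have "sc (\<i> * k) (sc (\<i> * k) u + Astar i v)
        + sc (1 / (\<i> * k)) (A (i - 1) (Astar (i - 1) (sc (\<i> * k) u + Astar i v)))
        + Astar i (A i u + sc (- (\<i> * k)) v)
      = Lap A Astar i u - sc (k\<^sup>2) u"
    unfolding Lap_def using \<open>k \<noteq> 0\<close>
    by (simp add: module_hom.add[OF A] module_hom.scale[OF A] module_hom.zero[OF A]
        module_hom.add[OF As] module_hom.scale[OF As] module_hom.diff[OF As] AsAs scale_right_distrib scale_minus_left)
  then show ?thesis
    unfolding Phi_def Maxwell_def by (simp flip: module_hom.add[OF G])
qed

lemma snd_Phi_Maxwell:
  assumes "vector_space sc"
    and linA: "\<forall>j. Vector_Spaces.linear sc sc (A j)"
    and linAs: "\<forall>j. Vector_Spaces.linear sc sc (Astar j)"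
    and linG: "Vector_Spaces.linear sc sc Gi1"
    and "k \<noteq> 0"
    and AA: "A (i + 1) (A i u) = 0"
  shows "snd (Phi sc A Astar k i Gi Gi1 (Maxwell sc A Astar k i (u, v)))
           = Gi1 (Lap A Astar (i + 1) v - sc (k\<^sup>2) v)"
proof -
  interpret vector_space sc by fact
  have A: "module_hom sc sc (A j)" and As: "module_hom sc sc (Astar j)" for j
    using linA linAs by (simp_all add: linear_iff_module_hom)
  have G: "module_hom sc sc Gi1" using linG by (simp add: linear_iff_module_hom)
  have "(\<i> * k) * (\<i> * k) = - k\<^sup>2" by (simp add: power2_eq_square algebra_simps)
  then have "A i (sc (\<i> * k) u + Astar i v)
        + (sc (- (\<i> * k)) (A i u + sc (- (\<i> * k)) v)
           - sc (1 / (\<i> * k)) (Astar (i + 1) (A (i + 1) (A i u + sc (- (\<i> * k)) v))))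
      = Lap A Astar (i + 1) v - sc (k\<^sup>2) v"
    unfolding Lap_def using \<open>k \<noteq> 0\<close>
    by (simp add: module_hom.add[OF A] module_hom.scale[OF A] module_hom.zero[OF As]
        module_hom.add[OF As] module_hom.scale[OF As] module_hom.neg[OF As] module_hom.diff[OF A] AA
        scale_right_distrib scale_right_diff_distrib scale_minus_left)
  then show ?thesis
    unfolding Phi_def Maxwell_def by (simp flip: module_hom.add[OF G])
qed

theorem lemma2p1:
  fixes sc :: "complex \<Rightarrow> 's::ab_group_add \<Rightarrow> 's"
    and Cc :: "int \<Rightarrow> 's set"
    and ip :: "int \<Rightarrow> 's \<Rightarrow> 's \<Rightarrow> complex"
    and A Astar :: "int \<Rightarrow> 's \<Rightarrow> 's"
    and Gi Gi1 :: "'s \<Rightarrow> 's"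
    and N :: nat and i :: int and k :: complex
  assumes vs: "vector_space sc"
    and sub: "\<forall>j. csubspace_on sc (Cc j)"
    and zero: "\<forall>j. j < 0 \<or> j > int N \<longrightarrow> Cc j = {0}"
    and ipj: "\<forall>j. herm_ip_on sc (Cc j) (ip j)"
    and linA: "\<forall>j. Vector_Spaces.linear sc sc (A j)"
    and mapA: "\<forall>j. A j ` Cc j \<subseteq> Cc (j + 1)"
    and linAs: "\<forall>j. Vector_Spaces.linear sc sc (Astar j)"
    and mapAs: "\<forall>j. Astar j ` Cc (j + 1) \<subseteq> Cc j"
    and adj: "\<forall>j. \<forall>u\<in>Cc j. \<forall>v\<in>Cc (j + 1). ip (j + 1) (A j u) v = ip j u (Astar j v)"
    and cplx: "\<forall>j. \<forall>u\<in>Cc j. A (j + 1) (A j u) = 0"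
    and k: "k \<noteq> 0" "Im k \<ge> 0"
    and i: "-1 \<le> i" "i \<le> int N"
    and linG: "Vector_Spaces.linear sc sc Gi" "Vector_Spaces.linear sc sc Gi1"
    and Gi: "\<forall>w\<in>Cc i. Gi (Lap A Astar i w - sc (k^2) w) = w"
    and Gi1: "\<forall>w\<in>Cc (i + 1). Gi1 (Lap A Astar (i + 1) w - sc (k^2) w) = w"
  shows "\<forall>u\<in>Cc i. \<forall>v\<in>Cc (i + 1).
           Phi sc A Astar k i Gi Gi1 (Maxwell sc A Astar k i (u, v)) = (u, v)"
proof (intro ballI)
  fix u v assume u: "u \<in> Cc i" and v: "v \<in> Cc (i + 1)"
  have "v \<in> Cc (i - 1 + 2)" using v by (simp add: add.commute)
  then have "Astar (i - 1) (Astar i v) = 0"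
    using adjoint_comp_adjoint_eq_zero[OF sub ipj mapA mapAs adj cplx, of v "i - 1"] by simp
  then have "fst (Phi sc A Astar k i Gi Gi1 (Maxwell sc A Astar k i (u, v))) = u"
    using fst_Phi_Maxwell[OF vs linA linAs linG(1) k(1)] Gi u by simp
  moreover have "snd (Phi sc A Astar k i Gi Gi1 (Maxwell sc A Astar k i (u, v))) = v"
    using snd_Phi_Maxwell[OF vs linA linAs linG(2) k(1)] cplx Gi1 u v by simp
  ultimately show "Phi sc A Astar k i Gi Gi1 (Maxwell sc A Astar k i (u, v)) = (u, v)"
    by (simp add: prod_eq_iff)
qed

end
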